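(* Let $L$ be a totally ordered normal incline and let $A$ be a $3\times 3$ completely positive matrix over $L$. Then $A$ is LU-completely positive or UL-completely positive (or both).
   Context: An incline is a nonempty set $L$ with binary operations $\oplus,\otimes$ such that $(L,\oplus)$ is a semilattice ($\oplus$ associative, commutative, idempotent), $(L,\otimes)$ is a semigroup, $x\otimes(y\oplus z)=(x\otimes y)\oplus(x\otimes z)$ and $x\oplus(x\otimes y)=x$ for all $x,y,z$. The order is $x\le y\iff x\oplus y=y$; $L$ is totally ordered if this order is total, and commutative if $\otimes$ is commutative. An r-ideal is a nonempty $J\subseteq L$ closed under $\oplus$ and under multiplication by arbitrary elements of $L$; a lattice ideal is a nonempty $J\subseteq L$ closed under $\oplus$ and downward closed. A commutative incline $L$ is normal if it has an additive identity $\mathbf{0}$ and a multiplicative identity $\mathbf{1}$ and: every singly generated r-ideal is a lattice ideal (LI-property); for each $x$ there is a unique $c$ with $c\otimes c=x$; $x\otimes y\le(x\otimes x)\oplus(y\otimes y)$ for all $x,y$. Matrix product: $(BC)_{ij}=\bigoplus_k b_{ik}\otimes c_{kj}$; $B^T$ is the transpose. $A$ is completely positive if $A=BB^T$ for some $3\times k$ matrix $B$ over $L$ all of whose entries are of the form $c\otimes c$. $A$ is UL-completely positive if $A=UU^T$ for some upper triangular matrix $U$ over $L$, and LU-completely positive if $A=CC^T$ for some lower triangular matrix $C$ over $L$. *)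

theory Defs
  imports Main
begin

text \<open>An incline is modelled on a type 'a (the carrier L is the whole, nonempty, type)
  with operations add (oplus) and mul (otimes).\<close>

definition incline :: "('a \<Rightarrow> 'a \<Rightarrow> 'a) \<Rightarrow> ('a \<Rightarrow> 'a \<Rightarrow> 'a) \<Rightarrow> bool" where
  "incline add mul \<longleftrightarrow>
     (\<forall>x y z. add (add x y) z = add x (add y z)) \<and>
     (\<forall>x y. add x y = add y x) \<and>
     (\<forall>x. add x x = x) \<and>
     (\<forall>x y z. mul (mul x y) z = mul x (mul y z)) \<and>
     (\<forall>x y z. mul x (add y z) = add (mul x y) (mul x z)) \<and>
     (\<forall>x y. add x (mul x y) = x)"

definition inc_le :: "('a \<Rightarrow> 'a \<Rightarrow> 'a) \<Rightarrow> 'a \<Rightarrow> 'a \<Rightarrow> bool" where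
  "inc_le add x y \<longleftrightarrow> add x y = y"

definition totally_ordered :: "('a \<Rightarrow> 'a \<Rightarrow> 'a) \<Rightarrow> bool" where
  "totally_ordered add \<longleftrightarrow> (\<forall>x y. inc_le add x y \<or> inc_le add y x)"

definition commutative :: "('a \<Rightarrow> 'a \<Rightarrow> 'a) \<Rightarrow> bool" where
  "commutative mul \<longleftrightarrow> (\<forall>x y. mul x y = mul y x)"

definition r_ideal :: "('a \<Rightarrow> 'a \<Rightarrow> 'a) \<Rightarrow> ('a \<Rightarrow> 'a \<Rightarrow> 'a) \<Rightarrow> 'a set \<Rightarrow> bool" where
  "r_ideal add mul J \<longleftrightarrow> J \<noteq> {} \<and> (\<forall>x\<in>J. \<forall>y\<in>J. add x y \<in> J) \<and>
     (\<forall>x\<in>J. \<forall>a. mul a x \<in> J \<and> mul x a \<in> J)"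

definition lattice_ideal :: "('a \<Rightarrow> 'a \<Rightarrow> 'a) \<Rightarrow> 'a set \<Rightarrow> bool" where
  "lattice_ideal add J \<longleftrightarrow> J \<noteq> {} \<and> (\<forall>x\<in>J. \<forall>y\<in>J. add x y \<in> J) \<and>
     (\<forall>x\<in>J. \<forall>y. inc_le add y x \<longrightarrow> y \<in> J)"

definition gen_r_ideal :: "('a \<Rightarrow> 'a \<Rightarrow> 'a) \<Rightarrow> ('a \<Rightarrow> 'a \<Rightarrow> 'a) \<Rightarrow> 'a \<Rightarrow> 'a set" where
  "gen_r_ideal add mul x = \<Inter>{J. r_ideal add mul J \<and> x \<in> J}"

definition is_zero :: "('a \<Rightarrow> 'a \<Rightarrow> 'a) \<Rightarrow> 'a \<Rightarrow> bool" where
  "is_zero add z \<longleftrightarrow> (\<forall>x. add z x = x)"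

definition normal_incline :: "('a \<Rightarrow> 'a \<Rightarrow> 'a) \<Rightarrow> ('a \<Rightarrow> 'a \<Rightarrow> 'a) \<Rightarrow> bool" where
  "normal_incline add mul \<longleftrightarrow>
     incline add mul \<and> commutative mul \<and>
     (\<exists>z. is_zero add z) \<and>
     (\<exists>e. \<forall>x. mul e x = x \<and> mul x e = x) \<and>
     (\<forall>x. lattice_ideal add (gen_r_ideal add mul x)) \<and>
     (\<forall>x. \<exists>!c. mul c c = x) \<and>
     (\<forall>x y. inc_le add (mul x y) (add (mul x x) (mul y y)))"

fun bigsum :: "('a \<Rightarrow> 'a \<Rightarrow> 'a) \<Rightarrow> (nat \<Rightarrow> 'a) \<Rightarrow> nat \<Rightarrow> 'a" where
  "bigsum add f 0 = undefined"
| "bigsum add f (Suc 0) = f 0"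
| "bigsum add f (Suc (Suc n)) = add (bigsum add f (Suc n)) (f (Suc n))"

text \<open>Matrices are functions nat => nat => 'a (only the relevant index range matters).
  matmul add mul B C k is the product of B (with k columns) and C (with k rows).\<close>
definition matmul :: "('a \<Rightarrow> 'a \<Rightarrow> 'a) \<Rightarrow> ('a \<Rightarrow> 'a \<Rightarrow> 'a) \<Rightarrow>
    (nat \<Rightarrow> nat \<Rightarrow> 'a) \<Rightarrow> (nat \<Rightarrow> nat \<Rightarrow> 'a) \<Rightarrow> nat \<Rightarrow> nat \<Rightarrow> nat \<Rightarrow> 'a" where
  "matmul add mul B C k i j = bigsum add (\<lambda>l. mul (B i l) (C l j)) k"

definition transp_mat :: "(nat \<Rightarrow> nat \<Rightarrow> 'a) \<Rightarrow> nat \<Rightarrow> nat \<Rightarrow> 'a" where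
  "transp_mat B i j = B j i"

definition completely_positive3 :: "('a \<Rightarrow> 'a \<Rightarrow> 'a) \<Rightarrow> ('a \<Rightarrow> 'a \<Rightarrow> 'a) \<Rightarrow>
    (nat \<Rightarrow> nat \<Rightarrow> 'a) \<Rightarrow> bool" where
  "completely_positive3 add mul A \<longleftrightarrow>
     (\<exists>k B. k \<ge> 1 \<and> (\<forall>i<3. \<forall>l<k. \<exists>c. B i l = mul c c) \<and>
        (\<forall>i<3. \<forall>j<3. A i j = matmul add mul B (transp_mat B) k i j))"

definition UL_completely_positive3 :: "('a \<Rightarrow> 'a \<Rightarrow> 'a) \<Rightarrow> ('a \<Rightarrow> 'a \<Rightarrow> 'a) \<Rightarrow>
    (nat \<Rightarrow> nat \<Rightarrow> 'a) \<Rightarrow> bool" where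
  "UL_completely_positive3 add mul A \<longleftrightarrow>
     (\<exists>U. (\<forall>i<3. \<forall>j<3. j < i \<longrightarrow> is_zero add (U i j)) \<and>
        (\<forall>i<3. \<forall>j<3. A i j = matmul add mul U (transp_mat U) 3 i j))"

definition LU_completely_positive3 :: "('a \<Rightarrow> 'a \<Rightarrow> 'a) \<Rightarrow> ('a \<Rightarrow> 'a \<Rightarrow> 'a) \<Rightarrow>
    (nat \<Rightarrow> nat \<Rightarrow> 'a) \<Rightarrow> bool" where
  "LU_completely_positive3 add mul A \<longleftrightarrow>
     (\<exists>C. (\<forall>i<3. \<forall>j<3. i < j \<longrightarrow> is_zero add (C i j)) \<and>
        (\<forall>i<3. \<forall>j<3. A i j = matmul add mul C (transp_mat C) 3 i j))"

end

theory Submission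
  imports Defs
begin

text \<open>Write \<open>d\<^sub>i\<close> for the square root of the diagonal entry \<open>a\<^sub>i\<^sub>i\<close> of \<open>A = B B\<^sup>T\<close>.
  Since squaring is monotone and injective on a chain, every \<open>b\<^sub>i\<^sub>l\<close> lies below \<open>d\<^sub>i\<close>,
  hence \<open>a\<^sub>i\<^sub>j \<le> d\<^sub>i d\<^sub>j\<close>, and the LI-property turns this into a factorisation
  \<open>a\<^sub>i\<^sub>j = d\<^sub>i d\<^sub>j r\<^sub>i\<^sub>j\<close>. If \<open>r\<^sub>0\<^sub>1 \<le> r\<^sub>1\<^sub>2\<close>, the lower triangular factor with rows
  \<open>(d\<^sub>0,0,0)\<close>, \<open>(d\<^sub>1r\<^sub>0\<^sub>1,d\<^sub>1,0)\<close>, \<open>(d\<^sub>2r\<^sub>0\<^sub>2,d\<^sub>2r\<^sub>1\<^sub>2,d\<^sub>2)\<close> reproduces \<open>A\<close>: the surplus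
  terms are absorbed because \<open>x \<oplus> x y = x\<close>, and \<open>r\<^sub>0\<^sub>1 r\<^sub>0\<^sub>2 \<le> r\<^sub>1\<^sub>2\<close>. Otherwise
  \<open>r\<^sub>1\<^sub>2 \<le> r\<^sub>0\<^sub>1\<close> by totality, and the same construction applied to \<open>A\<close> with its index
  order reversed gives an upper triangular factor. That the entries of \<open>B\<close> are squares
  is never used.\<close>

locale comm_incline =
  fixes add mul :: "'a \<Rightarrow> 'a \<Rightarrow> 'a"
  assumes incline: "incline add mul"
    and commutative: "commutative mul"
begin

sublocale add: abel_semigroup add
  using incline unfolding incline_def by unfold_locales auto

sublocale mul: abel_semigroup mul
  using incline commutative unfolding incline_def commutative_def by unfold_locales auto

lemma add_idem: "add x x = x"
  using incline unfolding incline_def by blast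

lemma mul_add_distrib: "mul x (add y z) = add (mul x y) (mul x z)"
  using incline unfolding incline_def by blast

lemma add_mul_absorb: "add x (mul x y) = x"
  using incline unfolding incline_def by blast

abbreviation le :: "'a \<Rightarrow> 'a \<Rightarrow> bool" where
  "le \<equiv> inc_le add"

lemma le_iff: "le x y \<longleftrightarrow> add x y = y"
  by (simp add: inc_le_def)

lemma le_refl: "le x x"
  by (simp add: le_iff add_idem)

lemma le_trans: "le x y \<Longrightarrow> le y z \<Longrightarrow> le x z"
  unfolding le_iff by (metis add.assoc)

lemma le_antisym: "le x y \<Longrightarrow> le y x \<Longrightarrow> x = y"
  unfolding le_iff by (simp add: add.commute)

lemma le_add_left: "le x (add x y)"
  unfolding le_iff by (simp add: add.assoc[symmetric] add_idem)

lemma le_add_right: "le y (add x y)"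
  using le_add_left[of y x] by (simp add: add.commute)

lemma add_le: "le x z \<Longrightarrow> le y z \<Longrightarrow> le (add x y) z"
  unfolding le_iff by (simp add: add.assoc)

lemma mul_le_left: "le (mul x y) x"
  unfolding le_iff using add_mul_absorb add.commute by metis

lemma mul_mono: "le x y \<Longrightarrow> le u v \<Longrightarrow> le (mul x u) (mul y v)"
proof -
  have mono: "le (mul w a) (mul w b)" if "le a b" for w a b
    using that unfolding le_iff by (simp add: mul_add_distrib[symmetric])
  assume "le x y" "le u v"
  then show ?thesis
    using mono[of u v x] mono[of x y v] le_trans by (simp add: mul.commute)
qed

lemma zero_absorbs:
  assumes "is_zero add z"
  shows "mul z x = z" "mul x z = z" "add z x = x" "add x z = x"
  using assms add_mul_absorb mul.commute add.commute unfolding is_zero_def by metis+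

lemma bigsum_upper: "l < n \<Longrightarrow> le (f l) (bigsum add f n)"
proof (induction n)
  case (Suc n)
  then show ?case
    by (cases n) (auto simp: le_refl less_Suc_eq intro: le_trans le_add_left le_add_right)
qed simp

lemma bigsum_least: "1 \<le> n \<Longrightarrow> (\<And>l. l < n \<Longrightarrow> le (f l) c) \<Longrightarrow> le (bigsum add f n) c"
proof (induction n)
  case (Suc n)
  then show ?case by (cases n) (simp_all add: add_le)
qed simp

lemma r_ideal_multiples: "r_ideal add mul (range (mul x))"
proof -
  have "mul a (mul x t) = mul x (mul a t)" "mul (mul x t) a = mul x (mul t a)" for a t
    by (simp_all add: mul.left_commute mul.assoc)
  then show ?thesis
    unfolding r_ideal_def by (auto simp: mul_add_distrib[symmetric])
qed

lemma le_imp_multiple: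
  assumes unit: "\<And>x. mul e x = x"
    and LI: "lattice_ideal add (gen_r_ideal add mul x)"
    and "le y x"
  obtains t where "y = mul x t"
proof -
  have "x \<in> range (mul x)"
    using unit[of x] by (metis mul.commute rangeI)
  then have "gen_r_ideal add mul x \<subseteq> range (mul x)"
    unfolding gen_r_ideal_def using r_ideal_multiples by blast
  moreover have "y \<in> gen_r_ideal add mul x"
    using LI \<open>le y x\<close> unfolding lattice_ideal_def gen_r_ideal_def by blast
  ultimately show ?thesis using that by blast
qed

lemma matmul_transp_3:
  "matmul add mul C (transp_mat C) 3 i j =
     add (add (mul (C i 0) (C j 0)) (mul (C i 1) (C j 1))) (mul (C i 2) (C j 2))"
  by (simp add: matmul_def transp_mat_def numeral_3_eq_3 numeral_2_eq_2)

lemma square_absorb: "add (mul (mul a r) (mul a r)) (mul a a) = mul a a"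
  using add_mul_absorb[of "mul a a" "mul r r"]
  by (simp add: mul.assoc mul.left_commute add.commute)

lemma scaled_absorb:
  assumes "le s t"
  shows "add (mul x s) (mul x t) = mul x t"
  using assms unfolding le_iff by (simp add: mul_add_distrib[symmetric])

lemma matmul_transp_sym:
  "matmul add mul C (transp_mat C) k i j = matmul add mul C (transp_mat C) k j i"
  unfolding matmul_def transp_mat_def by (simp add: mul.commute)

lemma LU_completely_positive3I:
  assumes z: "is_zero add z"
    and diag: "\<And>i. i < 3 \<Longrightarrow> A i i = mul (d i) (d i)"
    and sym: "\<And>i j. i < 3 \<Longrightarrow> j < 3 \<Longrightarrow> A j i = A i j"
    and off: "\<And>i j. i < j \<Longrightarrow> j < 3 \<Longrightarrow> A i j = mul (mul (d i) (d j)) (r i j)"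
    and "le (r 0 1) (r 1 2)"
  shows "LU_completely_positive3 add mul A"
proof -
  define C :: "nat \<Rightarrow> nat \<Rightarrow> 'a" where
    "C i j = (if j = i then d i else if j < i then mul (d i) (r j i) else z)" for i j
  let ?P = "matmul add mul C (transp_mat C) 3"
  have "le (mul (r 0 1) (r 0 2)) (r 1 2)"
    using mul_le_left le_trans \<open>le (r 0 1) (r 1 2)\<close> by blast
  note zero = zero_absorbs[OF z]
  have P00: "?P 0 0 = mul (d 0) (d 0)"
    unfolding matmul_transp_3 C_def by (simp add: zero)
  have P01: "?P 0 1 = mul (mul (d 0) (d 1)) (r 0 1)"
    unfolding matmul_transp_3 C_def by (simp add: zero mul.assoc)
  have P02: "?P 0 2 = mul (mul (d 0) (d 2)) (r 0 2)"
    unfolding matmul_transp_3 C_def by (simp add: zero mul.assoc)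
  have P11: "?P 1 1 = mul (d 1) (d 1)"
    unfolding matmul_transp_3 C_def by (simp add: zero square_absorb)
  have "mul (mul (d 1) (r 0 1)) (mul (d 2) (r 0 2)) = mul (mul (d 1) (d 2)) (mul (r 0 1) (r 0 2))"
    and "mul (d 1) (mul (d 2) (r 1 2)) = mul (mul (d 1) (d 2)) (r 1 2)"
    by (simp_all add: mul.assoc mul.left_commute)
  then have P12: "?P 1 2 = mul (mul (d 1) (d 2)) (r 1 2)"
    using scaled_absorb[OF \<open>le (mul (r 0 1) (r 0 2)) (r 1 2)\<close>]
    unfolding matmul_transp_3 C_def by (simp add: zero)
  have P22: "?P 2 2 = mul (d 2) (d 2)"
    unfolding matmul_transp_3 C_def by (simp add: add.assoc square_absorb)
  have upper: "A i j = ?P i j" if "i \<le> j" "j < 3" for i j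
  proof -
    from that have "(i, j) \<in> {(0, 0), (0, 1), (0, 2), (1, 1), (1, 2), (2, 2)}"
      by (auto simp: numeral_3_eq_3 less_Suc_eq)
    then show ?thesis
      using P00 P01 P02 P11 P12 P22 diag off by auto
  qed
  have "A i j = ?P i j" if "i < 3" "j < 3" for i j
  proof (cases "i \<le> j")
    case False
    then show ?thesis
      using upper[of j i] sym[of j i] matmul_transp_sym that by simp
  qed (use upper that in simp)
  moreover have "is_zero add (C i j)" if "i < j" for i j
    using that z unfolding C_def by simp
  ultimately show ?thesis
    unfolding LU_completely_positive3_def by blast
qed

lemma UL_completely_positive3_if_LU_reversed:
  assumes "LU_completely_positive3 add mul (\<lambda>i j. A (2 - i) (2 - j))"
  shows "UL_completely_positive3 add mul A"
proof -
  obtain C where lower: "\<forall>i<3. \<forall>j<3. i < j \<longrightarrow> is_zero add (C i j)"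
    and prod: "\<forall>i<3. \<forall>j<3. A (2 - i) (2 - j) = matmul add mul C (transp_mat C) 3 i j"
    using assms unfolding LU_completely_positive3_def by blast
  define U where "U i j = C (2 - i) (2 - j)" for i j
  have "A i j = matmul add mul U (transp_mat U) 3 i j" if "i < 3" "j < 3" for i j
  proof -
    have "A i j = matmul add mul C (transp_mat C) 3 (2 - i) (2 - j)"
      using prod[rule_format, of "2 - i" "2 - j"] that by simp
    then show ?thesis
      unfolding matmul_transp_3 U_def by (simp add: add.commute add.left_commute)
  qed
  moreover have "is_zero add (U i j)" if "i < 3" "j < i" for i j
    using lower that unfolding U_def by simp
  ultimately show ?thesis
    unfolding UL_completely_positive3_def by blast
qed

lemma UL_completely_positive3I:
  assumes z: "is_zero add z"
    and diag: "\<And>i. i < 3 \<Longrightarrow> A i i = mul (d i) (d i)"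
    and sym: "\<And>i j. i < 3 \<Longrightarrow> j < 3 \<Longrightarrow> A j i = A i j"
    and off: "\<And>i j. i < j \<Longrightarrow> j < 3 \<Longrightarrow> A i j = mul (mul (d i) (d j)) (r i j)"
    and "le (r 1 2) (r 0 1)"
  shows "UL_completely_positive3 add mul A"
proof (rule UL_completely_positive3_if_LU_reversed,
    rule LU_completely_positive3I[where d = "\<lambda>i. d (2 - i)" and r = "\<lambda>i j. r (2 - j) (2 - i)"])
  fix i j :: nat
  assume "i < j" "j < 3"
  then show "A (2 - i) (2 - j) = mul (mul (d (2 - i)) (d (2 - j))) (r (2 - j) (2 - i))"
    using off[of "2 - j" "2 - i"] sym[of "2 - j" "2 - i"] by (simp add: mul.commute)
qed (use assms in simp_all)

end

locale normal_chain_incline =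
  fixes add mul :: "'a \<Rightarrow> 'a \<Rightarrow> 'a"
  assumes normal: "normal_incline add mul"
    and total: "totally_ordered add"
begin

sublocale comm_incline
  using normal unfolding normal_incline_def by unfold_locales blast+

lemma le_total: "le x y \<or> le y x"
  using total unfolding totally_ordered_def by blast

lemma square_root_exists: "\<exists>c. mul c c = x"
  using normal unfolding normal_incline_def by blast

lemma square_inject: "mul x x = mul y y \<Longrightarrow> x = y"
  using normal unfolding normal_incline_def by metis

lemma le_of_square_le:
  assumes "le (mul x x) (mul y y)"
  shows "le x y"
proof (cases "le x y")
  case False
  then have "le (mul y y) (mul x x)"
    using le_total mul_mono by blast
  then show ?thesis
    using assms le_antisym square_inject le_refl by metis
qed

lemma le_iff_multiple: "le y x \<longleftrightarrow> (\<exists>t. y = mul x t)"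
proof
  obtain e where "\<And>x. mul e x = x"
    using normal unfolding normal_incline_def by blast
  moreover have "lattice_ideal add (gen_r_ideal add mul x)"
    using normal unfolding normal_incline_def by blast
  moreover assume "le y x"
  ultimately obtain t where "y = mul x t"
    by (rule le_imp_multiple)
  then show "\<exists>t. y = mul x t" ..
qed (auto simp: mul_le_left)

lemma gram_entry_le:
  assumes "1 \<le> k"
    and di: "mul di di = bigsum add (\<lambda>l. mul (B i l) (B i l)) k"
    and dj: "mul dj dj = bigsum add (\<lambda>l. mul (B j l) (B j l)) k"
  shows "le (bigsum add (\<lambda>l. mul (B i l) (B j l)) k) (mul di dj)"
proof (rule bigsum_least[OF \<open>1 \<le> k\<close>])
  fix l
  assume "l < k"
  then have "le (B i l) di" "le (B j l) dj"
    using bigsum_upper[of l k] di dj by (metis le_of_square_le)+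
  then show "le (mul (B i l) (B j l)) (mul di dj)"
    by (rule mul_mono)
qed

lemma completely_positive3_factorization:
  assumes "completely_positive3 add mul A"
  obtains d r where "\<And>i. i < 3 \<Longrightarrow> A i i = mul (d i) (d i)"
    and "\<And>i j. i < 3 \<Longrightarrow> j < 3 \<Longrightarrow> A j i = A i j"
    and "\<And>i j. i < j \<Longrightarrow> j < 3 \<Longrightarrow> A i j = mul (mul (d i) (d j)) (r i j)"
proof -
  obtain k B where "1 \<le> k"
    and gram: "\<forall>i<3. \<forall>j<3. A i j = matmul add mul B (transp_mat B) k i j"
    using assms unfolding completely_positive3_def by blast
  have entry: "A i j = bigsum add (\<lambda>l. mul (B i l) (B j l)) k" if "i < 3" "j < 3" for i j
    using gram that unfolding matmul_def transp_mat_def by simp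
  define d where "d i = (SOME c. mul c c = A i i)" for i
  have d: "mul (d i) (d i) = A i i" for i
    unfolding d_def using someI_ex[OF square_root_exists] .
  have "le (A i j) (mul (d i) (d j))" if "i < 3" "j < 3" for i j
    using gram_entry_le[OF \<open>1 \<le> k\<close>, of "d i" B i "d j" j] d entry that by simp
  then have multiple: "\<exists>t. A i j = mul (mul (d i) (d j)) t" if "i < j" "j < 3" for i j
    using that by (simp add: le_iff_multiple)
  define r where "r i j = (SOME t. A i j = mul (mul (d i) (d j)) t)" for i j
  have off: "A i j = mul (mul (d i) (d j)) (r i j)" if "i < j" "j < 3" for i j
    unfolding r_def using someI_ex[OF multiple[OF that]] .
  have sym: "A j i = A i j" if "i < 3" "j < 3" for i j
    using entry that by (simp add: mul.commute)
  show ?thesis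
    by (rule that[OF d[symmetric] sym off])
qed

end

theorem mainTheorem10:
  fixes add mul :: "'a \<Rightarrow> 'a \<Rightarrow> 'a" and A :: "nat \<Rightarrow> nat \<Rightarrow> 'a"
  assumes "normal_incline add mul"
    and "totally_ordered add"
    and "completely_positive3 add mul A"
  shows "LU_completely_positive3 add mul A \<or> UL_completely_positive3 add mul A"
proof -
  interpret normal_chain_incline add mul
    using assms(1,2) by unfold_locales
  obtain z where z: "is_zero add z"
    using normal unfolding normal_incline_def by blast
  obtain d r where diag: "\<And>i. i < 3 \<Longrightarrow> A i i = mul (d i) (d i)"
    and sym: "\<And>i j. i < 3 \<Longrightarrow> j < 3 \<Longrightarrow> A j i = A i j"
    and off: "\<And>i j. i < j \<Longrightarrow> j < 3 \<Longrightarrow> A i j = mul (mul (d i) (d j)) (r i j)"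
    using completely_positive3_factorization[OF assms(3)] by blast
  consider "le (r 0 1) (r 1 2)" | "le (r 1 2) (r 0 1)"
    using le_total by blast
  then show ?thesis
  proof cases
    case 1
    with z diag sym off have "LU_completely_positive3 add mul A"
      by (rule LU_completely_positive3I)
    then show ?thesis ..
  next
    case 2
    with z diag sym off have "UL_completely_positive3 add mul A"
      by (rule UL_completely_positive3I)
    then show ?thesis ..
  qed
qed

end
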